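(* Let $B_i\colon\mathbb{R}^d\to\mathbb{R}^{d_i}$ be surjective linear maps, $c_i>0$, $\theta_i>0$ with $\sum_i\theta_i=1$, and suppose $\mathrm{BL}(\mathbf{B},\mathbf{c})<\infty$. Let $f\colon\mathbb{R}^d\to[0,\infty)$ be bounded, compactly supported and not almost everywhere zero, and put $f_i:=(B_i)_*f$. For $0<p<1$ let $p_i=p_i(p)$ be defined by $c_i(1-\frac1p)=\theta_i(1-\frac1{p_i})$, and set $$\Lambda(p):=\frac{\|f\|_{L^p(\mathbb{R}^d)}}{\mathrm{BL}(\mathbf{B},\mathbf{c})^{\frac1p-1}\prod_{i=1}^k\|f_i\|_{L^{p_i}(\mathbb{R}^{d_i})}^{\theta_i}}.$$ Then $$p^2\frac{d}{dp}\log\Lambda(p)=\log\mathrm{BL}(\mathbf{B},\mathbf{c})-H\!\left(\frac{f^p}{\|f\|_p^p}\right)+\sum_{i=1}^kc_iH\!\left(\frac{f_i^{p_i}}{\|f_i\|_{p_i}^{p_i}}\right).$$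
   Context: $\mathrm{BL}(\mathbf{B},\mathbf{c})$ is the best constant in $\int_{\mathbb{R}^d}\prod_if_i(B_ix)^{c_i}dx\le\mathrm{BL}\prod_i(\int f_i)^{c_i}$ over non-negative integrable $f_i$. The pushforward $B_*f$ is defined by $\int B_*f\cdot F=\int f\cdot F\circ B$ for all measurable $F\ge0$. For a probability density $g$, $H(g):=\int g\log\frac1g$ (continuous entropy). *)

theory Defs
  imports "HOL-Analysis.Analysis"
begin

text \<open>Euclidean space R^n, modelled as extensional functions on the index set {..<n}
  with the n-fold product of Lebesgue (Borel) measure.\<close>
definition Rn :: "nat \<Rightarrow> (nat \<Rightarrow> real) measure" where
  "Rn n = (\<Pi>\<^sub>M j\<in>{..<n}. (lborel :: real measure))"

definition lin_map :: "(nat \<Rightarrow> nat \<Rightarrow> real) \<Rightarrow> nat \<Rightarrow> nat \<Rightarrow> (nat \<Rightarrow> real) \<Rightarrow> (nat \<Rightarrow> real)" where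
  "lin_map M m n x = (\<lambda>j\<in>{..<m}. \<Sum>l<n. M j l * x l)"

definition BL :: "nat \<Rightarrow> nat \<Rightarrow> (nat \<Rightarrow> nat) \<Rightarrow> (nat \<Rightarrow> (nat \<Rightarrow> real) \<Rightarrow> (nat \<Rightarrow> real))
                  \<Rightarrow> (nat \<Rightarrow> real) \<Rightarrow> ennreal" where
  "BL d k dd B c = Inf {C. \<forall>g :: nat \<Rightarrow> (nat \<Rightarrow> real) \<Rightarrow> real.
      (\<forall>i<k. integrable (Rn (dd i)) (g i) \<and> (\<forall>y\<in>space (Rn (dd i)). 0 \<le> g i y)) \<longrightarrow>
      (\<integral>\<^sup>+ x. ennreal (\<Prod>i<k. g i (B i x) powr c i) \<partial>Rn d)
        \<le> C * ennreal (\<Prod>i<k. (\<integral> y. g i y \<partial>Rn (dd i)) powr c i)}"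

definition is_pushforward :: "(nat \<Rightarrow> real) measure \<Rightarrow> (nat \<Rightarrow> real) measure
     \<Rightarrow> ((nat \<Rightarrow> real) \<Rightarrow> (nat \<Rightarrow> real)) \<Rightarrow> ((nat \<Rightarrow> real) \<Rightarrow> real) \<Rightarrow> ((nat \<Rightarrow> real) \<Rightarrow> real) \<Rightarrow> bool" where
  "is_pushforward M N B f g \<longleftrightarrow>
     g \<in> borel_measurable N \<and> (\<forall>y\<in>space N. 0 \<le> g y) \<and>
     (\<forall>F \<in> borel_measurable N.
        (\<integral>\<^sup>+ y. ennreal (g y) * F y \<partial>N) = (\<integral>\<^sup>+ x. ennreal (f x) * F (B x) \<partial>M))"

definition Lp_norm :: "'a measure \<Rightarrow> real \<Rightarrow> ('a \<Rightarrow> real) \<Rightarrow> real" where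
  "Lp_norm M p f = (\<integral> x. \<bar>f x\<bar> powr p \<partial>M) powr (1 / p)"

definition cont_entropy :: "'a measure \<Rightarrow> ('a \<Rightarrow> real) \<Rightarrow> real" where
  "cont_entropy M g = (\<integral> x. g x * ln (1 / g x) \<partial>M)"

end

theory Submission
  imports Defs
begin

(* On 0 < q < 1,
     ln Lambda(q) = ln ||f||_q - (1/q - 1) ln BL - sum_i theta_i ln ||f_i||_(p_i(q)),
   so the identity is a chain-rule computation once one knows that
     d/dq ln ||g||_q = - H(g^q / ||g||_q^q) / q^2
   for every nonnegative integrable g, not a.e. zero, whose support has finite measure.
   This follows by differentiating q |-> int g^q under the integral sign: by the mean value
   theorem the difference quotients of g^q are dominated by a multiple of 1_(g > 0) + g.
   Since p_i'(q) = (c_i / theta_i) p_i(q)^2 / q^2, the i-th term contributes c_i H_i / q^2.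
   The compact support of f gives the f_i = (B_i)_* f bounded support, and BL > 0 (test the
   inequality on indicators of cubes) makes ln BL meaningful. *)

lemma has_real_derivative_integral_dominated:
  fixes F :: "real \<Rightarrow> 'a \<Rightarrow> real"
  assumes \<delta>: "0 < \<delta>"
    and F_int: "\<And>q. \<bar>q - r\<bar> < \<delta> \<Longrightarrow> integrable M (F q)"
    and F'_meas: "F' \<in> borel_measurable M"
    and deriv: "AE x in M. ((\<lambda>q. F q x) has_real_derivative F' x) (at r)"
    and w: "integrable M w"
    and dominated: "\<And>h. h \<noteq> 0 \<Longrightarrow> \<bar>h\<bar> < \<delta> \<Longrightarrow> AE x in M. \<bar>(F (r + h) x - F r x) / h\<bar> \<le> w x"
  shows "((\<lambda>q. \<integral>x. F q x \<partial>M) has_real_derivative (\<integral>x. F' x \<partial>M)) (at r)"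
  unfolding DERIV_def tendsto_at_iff_sequentially[where s=UNIV, simplified] comp_def
proof (intro allI impI)
  fix X :: "nat \<Rightarrow> real" assume X0: "\<forall>n. X n \<noteq> 0" and X: "X \<longlonglongrightarrow> 0"
  obtain N where N: "\<And>n. n \<ge> N \<Longrightarrow> \<bar>X n\<bar> < \<delta>"
    using X \<delta> unfolding LIMSEQ_iff by (metis diff_zero real_norm_def)
  define Y where "Y n = X (n + N)" for n
  have Y0: "Y n \<noteq> 0" and Y\<delta>: "\<bar>Y n\<bar> < \<delta>" for n
    using X0 N by (auto simp: Y_def)
  have Y_at: "filterlim Y (at 0) sequentially"
    using X Y0 unfolding Y_def by (intro filterlim_atI LIMSEQ_ignore_initial_segment) auto
  define s where "s n x = (F (r + Y n) x - F r x) / Y n" for n x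
  have int_s: "(\<integral>x. s n x \<partial>M) = ((\<integral>x. F (r + Y n) x \<partial>M) - (\<integral>x. F r x \<partial>M)) / Y n" for n
    using F_int[of "r + Y n"] F_int[of r] Y\<delta>[of n] \<delta> by (simp add: s_def)
  have "(\<lambda>n. \<integral>x. s n x \<partial>M) \<longlonglongrightarrow> (\<integral>x. F' x \<partial>M)"
  proof (rule integral_dominated_convergence[where w = w])
    show "s n \<in> borel_measurable M" for n
      using F_int[of "r + Y n"] F_int[of r] Y\<delta>[of n] \<delta> unfolding s_def
      by (auto intro!: borel_measurable_divide borel_measurable_diff)
    show "AE x in M. norm (s n x) \<le> w x" for n
      using dominated[OF Y0 Y\<delta>] by (simp add: s_def)
    show "AE x in M. (\<lambda>n. s n x) \<longlonglongrightarrow> F' x"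
      using deriv
    proof eventually_elim
      case (elim x)
      then show ?case
        unfolding DERIV_def s_def by (rule filterlim_compose[OF _ Y_at])
    qed
  qed fact+
  then have "(\<lambda>n. ((\<integral>x. F (r + X (n + N)) x \<partial>M) - (\<integral>x. F r x \<partial>M)) / X (n + N))
      \<longlonglongrightarrow> (\<integral>x. F' x \<partial>M)"
    by (simp add: int_s Y_def)
  then show "(\<lambda>n. ((\<integral>x. F (r + X n) x \<partial>M) - (\<integral>x. F r x \<partial>M)) / X n) \<longlonglongrightarrow> (\<integral>x. F' x \<partial>M)"
    by (rule LIMSEQ_offset)
qed

lemma abs_powr_mult_ln_le:
  fixes y t a b :: real
  assumes y: "0 \<le> y" and a: "0 < a" "a \<le> t" and b: "t \<le> b" "b < 1"
  shows "\<bar>y powr t * ln y\<bar> \<le> 1 / a + y / (1 - b)"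
proof -
  consider "y = 0" | "0 < y" "y \<le> 1" | "1 < y"
    using y by linarith
  then show ?thesis
  proof cases
    case 1
    then show ?thesis using a b by simp
  next
    case 2
    have u: "0 < y powr a"
      using \<open>0 < y\<close> by simp
    have "a * - ln y = ln (1 / y powr a)"
      using \<open>0 < y\<close> by (simp add: ln_div ln_powr)
    also have "\<dots> < 1 / y powr a"
      by (rule ln_less_self) (use u in simp)
    finally have "y powr a * - ln y \<le> 1 / a"
      using u a by (simp add: field_simps)
    moreover have "y powr t * - ln y \<le> y powr a * - ln y"
      using 2 a by (intro mult_right_mono powr_mono') auto
    moreover have "y powr t * ln y \<le> 0"
      using 2 by (simp add: mult_nonneg_nonpos)
    moreover have "0 \<le> y / (1 - b)"
      using y b by simp
    ultimately show ?thesis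
      by linarith
  next
    case 3
    have u: "0 < y powr b"
      using \<open>1 < y\<close> by simp
    have "(1 - b) * ln y = ln (y powr (1 - b))"
      using \<open>1 < y\<close> by (simp add: ln_powr)
    also have "\<dots> < y powr (1 - b)"
      by (rule ln_less_self) (use \<open>1 < y\<close> in simp)
    also have "\<dots> = y / y powr b"
      using \<open>1 < y\<close> by (simp add: powr_diff)
    finally have "y powr b * ln y \<le> y / (1 - b)"
      using u b by (simp add: field_simps)
    moreover have "y powr t * ln y \<le> y powr b * ln y"
      using 3 b by (intro mult_right_mono powr_mono) auto
    moreover have "0 \<le> y powr t * ln y"
      using 3 by simp
    moreover have "0 < 1 / a"
      using a by simp
    ultimately show ?thesis
      by linarith
  qed
qed

lemma abs_powr_difference_quotient_le:
  fixes y r h a b :: real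
  assumes y: "0 \<le> y" and a: "0 < a" "a \<le> r" "a \<le> r + h" and b: "r \<le> b" "r + h \<le> b" "b < 1"
    and h: "h \<noteq> 0"
  shows "\<bar>(y powr (r + h) - y powr r) / h\<bar> \<le> 1 / a + y / (1 - b)"
proof (cases "y = 0")
  case True
  then show ?thesis using a b by simp
next
  case False
  then have deriv: "\<And>t. DERIV (\<lambda>t. y powr t) t :> y powr t * ln y"
    using y by (auto intro!: derivative_eq_intros)
  obtain z where z: "min r (r + h) < z" "z < max r (r + h)"
    and quotient: "(y powr (r + h) - y powr r) / h = y powr z * ln y"
  proof (cases "0 < h")
    case True
    then obtain z where "r < z" "z < r + h" "y powr (r + h) - y powr r = h * (y powr z * ln y)"
      using MVT2[of r "r + h" "\<lambda>t. y powr t" "\<lambda>t. y powr t * ln y"] deriv by auto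
    then show ?thesis using True that[of z] by simp
  next
    case False
    then obtain z where "r + h < z" "z < r" "y powr r - y powr (r + h) = - h * (y powr z * ln y)"
      using MVT2[of "r + h" r "\<lambda>t. y powr t" "\<lambda>t. y powr t * ln y"] deriv h by fastforce
    then show ?thesis using False h that[of z] by (simp add: field_simps)
  qed
  show ?thesis
    unfolding quotient using z a b by (intro abs_powr_mult_ln_le y) auto
qed

(* The map q |-> p_i(q) defined by c_i (1 - 1/q) = theta_i (1 - 1/p_i), with a = c_i / theta_i. *)
lemma exponent_map_bounds:
  fixes a q :: real
  assumes "0 < a" "0 < q" "q < 1"
  shows "0 < 1 / (1 - a * (1 - 1 / q))" "1 / (1 - a * (1 - 1 / q)) < 1"
proof -
  have "a * (1 - 1 / q) < 0"
    using assms by (intro mult_pos_neg) auto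
  then show "0 < 1 / (1 - a * (1 - 1 / q))" "1 / (1 - a * (1 - 1 / q)) < 1"
    by auto
qed

lemma has_real_derivative_exponent_map:
  fixes a p :: real
  assumes "0 < a" "0 < p" "p < 1"
  shows "((\<lambda>q. 1 / (1 - a * (1 - 1 / q))) has_real_derivative
           a * (1 / (1 - a * (1 - 1 / p)))\<^sup>2 / p\<^sup>2) (at p)"
proof -
  have nz: "1 - a * (1 - 1 / p) \<noteq> 0"
    using exponent_map_bounds[OF assms] by auto
  have du: "((\<lambda>q. 1 - a * (1 - 1 / q)) has_real_derivative - a / p\<^sup>2) (at p)"
    using assms by (auto intro!: derivative_eq_intros simp: power2_eq_square)
  have quotient: "(0 * D - 1 * (- a / p\<^sup>2)) / (D * D) = a * (1 / D)\<^sup>2 / p\<^sup>2" for D :: real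
    by (simp add: power2_eq_square)
  show ?thesis
    using DERIV_divide[OF DERIV_const[of 1] du nz] unfolding quotient .
qed

locale finite_support_function =
  fixes M :: "'a measure" and g :: "'a \<Rightarrow> real"
  assumes borel_measurable[measurable]: "g \<in> borel_measurable M"
    and nonneg: "\<And>x. x \<in> space M \<Longrightarrow> 0 \<le> g x"
    and integrable: "integrable M g"
    and support_finite: "emeasure M {x \<in> space M. g x \<noteq> 0} < \<infinity>"
    and not_AE_zero: "\<not> (AE x in M. g x = 0)"
begin

abbreviation support :: "'a set" where
  "support \<equiv> {x \<in> space M. g x \<noteq> 0}"

lemma integrable_indicator_support: "integrable M (indicator support :: 'a \<Rightarrow> real)"
  using support_finite by (simp add: less_top)

lemma integrable_powr:
  assumes q: "0 < q" "q \<le> 1"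
  shows "integrable M (\<lambda>x. g x powr q)"
proof (rule Bochner_Integration.integrable_bound)
  show "integrable M (\<lambda>x. indicator support x + g x)"
    using integrable_indicator_support integrable by simp
  show "AE x in M. norm (g x powr q) \<le> norm (indicator support x + g x)"
  proof (rule AE_I2)
    fix x assume x: "x \<in> space M"
    have "g x powr q \<le> 1 + g x"
      using nonneg[OF x] q powr_le1[of q "g x"] powr_mono[of q 1 "g x"]
      by (cases "g x \<le> 1") auto
    then show "norm (g x powr q) \<le> norm (indicator support x + g x)"
      using x nonneg[OF x] by (simp add: indicator_def)
  qed
qed measurable

lemma integrable_powr_mult_ln:
  assumes r: "0 < r" "r < 1"
  shows "integrable M (\<lambda>x. g x powr r * ln (g x))"
proof (rule Bochner_Integration.integrable_bound)
  show "integrable M (\<lambda>x. 1 / r * indicator support x + g x / (1 - r))"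
    using integrable_indicator_support integrable by simp
  show "AE x in M. norm (g x powr r * ln (g x)) \<le> norm (1 / r * indicator support x + g x / (1 - r))"
  proof (rule AE_I2)
    fix x assume x: "x \<in> space M"
    show "norm (g x powr r * ln (g x)) \<le> norm (1 / r * indicator support x + g x / (1 - r))"
      using abs_powr_mult_ln_le[OF nonneg[OF x] r(1) order.refl order.refl r(2)] x nonneg[OF x] r
      by (cases "g x = 0") (auto simp: indicator_def)
  qed
qed measurable

lemma integral_powr_pos:
  assumes "0 < q" "q \<le> 1"
  shows "0 < (\<integral>x. g x powr q \<partial>M)"
proof -
  have "AE x in M. 0 \<le> g x powr q"
    by simp
  moreover have "\<not> (AE x in M. g x powr q = 0)"
    using not_AE_zero by (auto elim: AE_mp)
  ultimately show ?thesis
    using integral_nonneg_eq_0_iff_AE[OF integrable_powr[OF assms]] integral_nonneg_AE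
    by (metis order_le_less)
qed

lemma Lp_norm_eq: "Lp_norm M q g = (\<integral>x. g x powr q \<partial>M) powr (1 / q)"
proof -
  have "(\<integral>x. \<bar>g x\<bar> powr q \<partial>M) = (\<integral>x. g x powr q \<partial>M)"
    by (rule Bochner_Integration.integral_cong) (simp_all add: nonneg)
  then show ?thesis
    unfolding Lp_norm_def by simp
qed

lemma Lp_norm_pos: "0 < q \<Longrightarrow> q \<le> 1 \<Longrightarrow> 0 < Lp_norm M q g"
  using integral_powr_pos[of q] by (simp add: Lp_norm_eq)

lemma has_real_derivative_integral_powr:
  assumes r: "0 < r" "r < 1"
  shows "((\<lambda>q. \<integral>x. g x powr q \<partial>M) has_real_derivative (\<integral>x. g x powr r * ln (g x) \<partial>M)) (at r)"
proof (rule has_real_derivative_integral_dominated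
    [where \<delta> = "min (r / 2) ((1 - r) / 2)" and w = "\<lambda>x. 2 / r * indicator support x + 2 * g x / (1 - r)"])
  have near: "r / 2 < q \<and> q < (1 + r) / 2" if "\<bar>q - r\<bar> < min (r / 2) ((1 - r) / 2)" for q
    using that unfolding abs_less_iff min_less_iff_conj by auto
  show "0 < min (r / 2) ((1 - r) / 2)"
    using r by simp
  show "integrable M (\<lambda>x. g x powr q)" if "\<bar>q - r\<bar> < min (r / 2) ((1 - r) / 2)" for q
    using near[OF that] r by (intro integrable_powr) auto
  show "integrable M (\<lambda>x. 2 / r * indicator support x + 2 * g x / (1 - r))"
    using integrable_indicator_support integrable by simp
  show "AE x in M. ((\<lambda>q. g x powr q) has_real_derivative g x powr r * ln (g x)) (at r)"
  proof (rule AE_I2)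
    fix x assume x: "x \<in> space M"
    show "((\<lambda>q. g x powr q) has_real_derivative g x powr r * ln (g x)) (at r)"
      using nonneg[OF x] by (cases "g x = 0") (auto intro!: derivative_eq_intros)
  qed
  show "AE x in M. \<bar>(g x powr (r + h) - g x powr r) / h\<bar> \<le> 2 / r * indicator support x + 2 * g x / (1 - r)"
    if h: "h \<noteq> 0" "\<bar>h\<bar> < min (r / 2) ((1 - r) / 2)" for h
  proof (rule AE_I2)
    fix x assume x: "x \<in> space M"
    have "\<bar>(g x powr (r + h) - g x powr r) / h\<bar> \<le> 1 / (r / 2) + g x / (1 - (1 + r) / 2)"
      using near[of "r + h"] h r by (intro abs_powr_difference_quotient_le nonneg[OF x]) auto
    moreover have "1 / (r / 2) + g x / (1 - (1 + r) / 2) = 2 / r + 2 * g x / (1 - r)"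
      using r by (simp add: field_simps)
    ultimately show "\<bar>(g x powr (r + h) - g x powr r) / h\<bar> \<le> 2 / r * indicator support x + 2 * g x / (1 - r)"
      using x by (cases "g x = 0") (simp_all add: indicator_def)
  qed
qed measurable

lemma cont_entropy_normalized_powr:
  assumes r: "0 < r" "r < 1"
  defines "I \<equiv> \<integral>x. g x powr r \<partial>M"
  shows "cont_entropy M (\<lambda>x. g x powr r / Lp_norm M r g powr r)
    = ln I - r * (\<integral>x. g x powr r * ln (g x) \<partial>M) / I"
proof -
  have I: "0 < I"
    unfolding I_def using r by (intro integral_powr_pos) auto
  have norm: "Lp_norm M r g powr r = I"
    using I r by (simp add: Lp_norm_eq I_def powr_powr)
  have "g x powr r / I * ln (1 / (g x powr r / I))
      = ln I / I * g x powr r - r / I * (g x powr r * ln (g x))" if "x \<in> space M" for x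
  proof (cases "g x = 0")
    case False
    then have ln_eq: "ln (1 / (g x powr r / I)) = ln I - r * ln (g x)"
      using nonneg[OF that] I by (simp add: ln_div ln_powr)
    show ?thesis
      unfolding ln_eq using I by (simp add: field_simps)
  qed simp
  then have "cont_entropy M (\<lambda>x. g x powr r / Lp_norm M r g powr r)
      = (\<integral>x. ln I / I * g x powr r - r / I * (g x powr r * ln (g x)) \<partial>M)"
    unfolding cont_entropy_def norm by (intro Bochner_Integration.integral_cong) auto
  also have "\<dots> = ln I / I * (\<integral>x. g x powr r \<partial>M) - r / I * (\<integral>x. g x powr r * ln (g x) \<partial>M)"
    using integrable_powr[of r] integrable_powr_mult_ln[OF r] r by simp
  also have "\<dots> = ln I - r * (\<integral>x. g x powr r * ln (g x) \<partial>M) / I"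
    using I unfolding I_def[symmetric] by simp
  finally show ?thesis .
qed

lemma has_real_derivative_ln_Lp_norm:
  assumes r: "0 < r" "r < 1"
  shows "((\<lambda>q. ln (Lp_norm M q g)) has_real_derivative
           - cont_entropy M (\<lambda>x. g x powr r / Lp_norm M r g powr r) / r\<^sup>2) (at r)"
proof -
  define I where "I q = (\<integral>x. g x powr q \<partial>M)" for q
  define I' where "I' = (\<integral>x. g x powr r * ln (g x) \<partial>M)"
  have I: "0 < I q" if "0 < q" "q \<le> 1" for q
    unfolding I_def using that by (rule integral_powr_pos)
  have dI: "(I has_real_derivative I') (at r)"
    unfolding I_def[abs_def] I'_def by (rule has_real_derivative_integral_powr[OF r])
  have d: "((\<lambda>q. ln (I q) / q) has_real_derivative (r * I' / I r - ln (I r)) / r\<^sup>2) (at r)"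
    by (rule DERIV_cong[OF DERIV_quotient[OF DERIV_chain2[OF DERIV_ln_divide dI] DERIV_ident]])
      (use r I[of r] in \<open>simp_all add: power2_eq_square\<close>)
  have eq: "ln (Lp_norm M q g) = ln (I q) / q" if "q \<in> {0<..<1}" for q
  proof -
    have "Lp_norm M q g = I q powr (1 / q)"
      unfolding I_def by (rule Lp_norm_eq)
    then show ?thesis
      using I[of q] that by (simp add: ln_powr)
  qed
  have "((\<lambda>q. ln (Lp_norm M q g)) has_real_derivative (r * I' / I r - ln (I r)) / r\<^sup>2) (at r)"
    by (rule has_field_derivative_transform_within_open[OF d, where S = "{0<..<1}"]) (use r eq in auto)
  also have "(r * I' / I r - ln (I r)) / r\<^sup>2
      = - cont_entropy M (\<lambda>x. g x powr r / Lp_norm M r g powr r) / r\<^sup>2"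
    unfolding cont_entropy_normalized_powr[OF r] I_def[symmetric] I'_def[symmetric] by simp
  finally show ?thesis .
qed

lemma has_real_derivative_ln_Lp_norm_exponent_map:
  fixes a p :: real
  assumes a: "0 < a" and p: "0 < p" "p < 1"
  defines "r \<equiv> 1 / (1 - a * (1 - 1 / p))"
  shows "((\<lambda>q. ln (Lp_norm M (1 / (1 - a * (1 - 1 / q))) g)) has_real_derivative
           - a * cont_entropy M (\<lambda>x. g x powr r / Lp_norm M r g powr r) / p\<^sup>2) (at p)"
proof -
  have r: "0 < r" "r < 1"
    unfolding r_def using exponent_map_bounds[OF a p] by auto
  have chain: "- H / r\<^sup>2 * (a * r\<^sup>2 / p\<^sup>2) = - a * H / p\<^sup>2" for H
    using r by (simp add: field_simps)
  from DERIV_chain2[OF has_real_derivative_ln_Lp_norm[OF r[unfolded r_def]]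
      has_real_derivative_exponent_map[OF a p]]
  show ?thesis
    unfolding r_def[symmetric] chain .
qed

end

lemma finite_support_functionI:
  assumes g[measurable]: "g \<in> borel_measurable M"
    and nonneg: "\<And>x. x \<in> space M \<Longrightarrow> 0 \<le> g x"
    and bounded: "\<And>x. x \<in> space M \<Longrightarrow> g x \<le> C"
    and S[measurable]: "S \<in> sets M" and S_finite: "emeasure M S < \<infinity>"
    and support: "\<And>x. x \<in> space M \<Longrightarrow> g x \<noteq> 0 \<Longrightarrow> x \<in> S"
    and not_AE_zero: "\<not> (AE x in M. g x = 0)"
  shows "finite_support_function M g"
proof
  show "integrable M g"
  proof (rule Bochner_Integration.integrable_bound)
    show "integrable M (\<lambda>x. C * indicator S x)"
      using S_finite by (simp add: less_top)
    show "AE x in M. norm (g x) \<le> norm (C * indicator S x)"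
      using nonneg bounded support by (intro AE_I2) (force simp: indicator_def)
  qed measurable
  have "emeasure M {x \<in> space M. g x \<noteq> 0} \<le> emeasure M S"
    using support by (intro emeasure_mono) auto
  then show "emeasure M {x \<in> space M. g x \<noteq> 0} < \<infinity>"
    using S_finite by simp
qed (use assms in auto)

lemma is_pushforward_nn_integral:
  assumes "is_pushforward M N B f g"
  shows "(\<integral>\<^sup>+y. ennreal (g y) \<partial>N) = (\<integral>\<^sup>+x. ennreal (f x) \<partial>M)"
proof -
  have "\<forall>F\<in>borel_measurable N. (\<integral>\<^sup>+y. ennreal (g y) * F y \<partial>N) = (\<integral>\<^sup>+x. ennreal (f x) * F (B x) \<partial>M)"
    using assms unfolding is_pushforward_def by blast
  from bspec[OF this, of "\<lambda>_. 1"] show ?thesis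
    by simp
qed

lemma is_pushforward_AE_support:
  assumes push: "is_pushforward M N B f g" and S[measurable]: "S \<in> sets N"
    and maps_support: "\<And>x. x \<in> space M \<Longrightarrow> f x \<noteq> 0 \<Longrightarrow> B x \<in> S"
  shows "AE y in N. g y \<noteq> 0 \<longrightarrow> y \<in> S"
proof -
  have [measurable]: "g \<in> borel_measurable N" and g_nonneg: "\<And>y. y \<in> space N \<Longrightarrow> 0 \<le> g y"
    using push unfolding is_pushforward_def by auto
  have "(\<integral>\<^sup>+y. ennreal (g y) * indicator (space N - S) y \<partial>N)
      = (\<integral>\<^sup>+x. ennreal (f x) * indicator (space N - S) (B x) \<partial>M)"
    using push unfolding is_pushforward_def by auto
  also have "\<dots> = (\<integral>\<^sup>+x. 0 \<partial>M)"
    using maps_support by (intro nn_integral_cong) (fastforce simp: indicator_def)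
  finally have "(\<integral>\<^sup>+y. ennreal (g y) * indicator (space N - S) y \<partial>N) = 0"
    by simp
  then have "AE y in N. ennreal (g y) * indicator (space N - S) y = 0"
    by (subst (asm) nn_integral_0_iff_AE) auto
  then show ?thesis
    using AE_space by eventually_elim (use g_nonneg in \<open>force simp: indicator_def\<close>)
qed

lemma finite_support_function_pushforward:
  assumes f: "finite_support_function M f" and push: "is_pushforward M N B f g"
    and S: "S \<in> sets N" "emeasure N S < \<infinity>"
    and maps_support: "\<And>x. x \<in> space M \<Longrightarrow> f x \<noteq> 0 \<Longrightarrow> B x \<in> S"
  shows "finite_support_function N g"
proof -
  interpret f: finite_support_function M f
    by (fact f)
  have g: "g \<in> borel_measurable N" and g_nonneg: "\<And>y. y \<in> space N \<Longrightarrow> 0 \<le> g y"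
    using push unfolding is_pushforward_def by auto
  have mass: "(\<integral>\<^sup>+y. ennreal (g y) \<partial>N) = (\<integral>\<^sup>+x. ennreal (f x) \<partial>M)"
    using push by (rule is_pushforward_nn_integral)
  have "AE y in N. g y \<noteq> 0 \<longrightarrow> y \<in> S"
    using push S(1) maps_support by (rule is_pushforward_AE_support)
  then have "emeasure N {y \<in> space N. g y \<noteq> 0} \<le> emeasure N S"
    using S(1) by (intro emeasure_mono_AE) (auto elim: eventually_mono)
  then have support_finite: "emeasure N {y \<in> space N. g y \<noteq> 0} < \<infinity>"
    using S(2) by simp
  have "(\<integral>\<^sup>+x. ennreal (f x) \<partial>M) < \<infinity>"
    using f.integrable f.nonneg by (simp add: nn_integral_eq_integral)
  then have integrable: "integrable N g"
    using g mass g_nonneg by (intro integrableI_nonneg) auto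
  have f_mass: "(\<integral>\<^sup>+x. ennreal (f x) \<partial>M) \<noteq> 0"
    using f.not_AE_zero f.nonneg by (subst nn_integral_0_iff_AE) (auto elim!: eventually_mono)
  have "\<not> (AE y in N. g y = 0)"
  proof
    assume "AE y in N. g y = 0"
    then have "(\<integral>\<^sup>+y. ennreal (g y) \<partial>N) = (\<integral>\<^sup>+y. 0 \<partial>N)"
      by (intro nn_integral_cong_AE) (auto elim: eventually_mono)
    with mass f_mass show False
      by simp
  qed
  with g g_nonneg integrable support_finite show ?thesis
    by unfold_locales
qed

definition cube :: "nat \<Rightarrow> real \<Rightarrow> (nat \<Rightarrow> real) set" where
  "cube n R = PiE {..<n} (\<lambda>_. {-R..R})"

lemma space_Rn: "space (Rn n) = PiE {..<n} (\<lambda>_. UNIV)"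
  unfolding Rn_def by (simp add: space_PiM)

lemma mem_cube: "x \<in> cube n R \<longleftrightarrow> x \<in> extensional {..<n} \<and> (\<forall>j<n. \<bar>x j\<bar> \<le> R)"
proof -
  have "x j \<in> {-R..R} \<longleftrightarrow> \<bar>x j\<bar> \<le> R" for j
    by auto
  then show ?thesis
    unfolding cube_def PiE_iff by auto
qed

lemma sets_cube[measurable]: "cube n R \<in> sets (Rn n)"
  unfolding cube_def Rn_def by (rule sets_PiM_I_finite) auto

lemma emeasure_cube: "emeasure (Rn n) (cube n R) = ennreal (2 * R) ^ n"
proof -
  interpret product_sigma_finite "\<lambda>_::nat. lborel"
    by standard
  have "emeasure (Rn n) (cube n R) = (\<Prod>i<n. emeasure lborel {-R..R})"
    unfolding cube_def Rn_def by (rule emeasure_PiM) auto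
  also have "\<dots> = ennreal (2 * R) ^ n"
    by (simp add: emeasure_lborel_Icc_eq ennreal_neg)
  finally show ?thesis .
qed

lemma emeasure_cube_finite: "emeasure (Rn n) (cube n R) < \<infinity>"
  by (simp add: emeasure_cube power_less_top_ennreal)

lemma integrable_indicator_cube: "integrable (Rn n) (indicator (cube n R) :: (nat \<Rightarrow> real) \<Rightarrow> real)"
  using emeasure_cube_finite by (simp add: less_top)

lemma measure_cube: "0 \<le> R \<Longrightarrow> measure (Rn n) (cube n R) = (2 * R) ^ n"
  by (simp add: measure_def emeasure_cube ennreal_power)

lemma cube_mono: "R \<le> R' \<Longrightarrow> cube n R \<subseteq> cube n R'"
  unfolding cube_def by (rule PiE_mono) auto

lemma compact_subset_cube:
  assumes "compact K"
  obtains R where "0 \<le> R" "K \<inter> space (Rn n) \<subseteq> cube n R"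
proof -
  have "\<exists>b. \<forall>x\<in>K. \<bar>x j\<bar> \<le> b" for j
  proof -
    have "compact ((\<lambda>x. x j) ` K)"
      using assms continuous_on_subset[OF continuous_on_product_coordinates]
      by (intro compact_continuous_image) auto
    then have "bounded ((\<lambda>x. x j) ` K)"
      by (rule compact_imp_bounded)
    then show ?thesis
      unfolding bounded_iff by auto
  qed
  then obtain b where b: "\<And>j x. x \<in> K \<Longrightarrow> \<bar>x j\<bar> \<le> b j"
    by metis
  have "\<bar>x j\<bar> \<le> (\<Sum>j<n. \<bar>b j\<bar>)" if "x \<in> K" "j < n" for x j
    using b[OF that(1), of j] member_le_sum[of j "{..<n}" "\<lambda>j. \<bar>b j\<bar>"] that(2) by auto
  then have "K \<inter> space (Rn n) \<subseteq> cube n (\<Sum>j<n. \<bar>b j\<bar>)"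
    unfolding space_Rn by (auto simp: PiE_iff mem_cube)
  then show ?thesis
    by (rule that[rotated]) (simp add: sum_nonneg)
qed

lemma lin_map_cube:
  assumes x: "x \<in> cube n R" and R: "0 \<le> R"
  shows "lin_map M m n x \<in> cube m ((\<Sum>j<m. \<Sum>l<n. \<bar>M j l\<bar>) * R)"
proof -
  have x_le: "\<bar>x l\<bar> \<le> R" if "l < n" for l
    using x that unfolding mem_cube by auto
  have "\<bar>\<Sum>l<n. M j l * x l\<bar> \<le> (\<Sum>j<m. \<Sum>l<n. \<bar>M j l\<bar>) * R" if j: "j < m" for j
  proof -
    have "\<bar>\<Sum>l<n. M j l * x l\<bar> \<le> (\<Sum>l<n. \<bar>M j l\<bar> * R)"
      using x_le by (intro order.trans[OF sum_abs] sum_mono) (auto simp: abs_mult intro!: mult_left_mono)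
    also have "\<dots> \<le> (\<Sum>j<m. \<Sum>l<n. \<bar>M j l\<bar>) * R"
      unfolding sum_distrib_right[symmetric] using j R
      by (intro mult_right_mono member_le_sum[of j "{..<m}" "\<lambda>j. \<Sum>l<n. \<bar>M j l\<bar>"]) (auto simp: sum_nonneg)
    finally show ?thesis .
  qed
  then show ?thesis
    unfolding lin_map_def mem_cube by auto
qed

lemma finite_support_function_compact_support:
  assumes f: "f \<in> borel_measurable (Rn n)" "\<And>x. x \<in> space (Rn n) \<Longrightarrow> 0 \<le> f x"
    and bounded: "\<forall>x\<in>space (Rn n). f x \<le> C"
    and K: "compact K" "\<forall>x\<in>space (Rn n). f x \<noteq> 0 \<longrightarrow> x \<in> K"
    and not_AE_zero: "\<not> (AE x in Rn n. f x = 0)"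
  shows "finite_support_function (Rn n) f"
proof -
  obtain R where "K \<inter> space (Rn n) \<subseteq> cube n R"
    using compact_subset_cube[OF K(1)] by blast
  then show ?thesis
    using assms emeasure_cube_finite by (intro finite_support_functionI[where C = C and S = "cube n R"]) auto
qed

lemma finite_support_function_pushforward_lin_map:
  assumes f: "finite_support_function (Rn n) f"
    and K: "compact K" "\<forall>x\<in>space (Rn n). f x \<noteq> 0 \<longrightarrow> x \<in> K"
    and push: "is_pushforward (Rn n) (Rn m) (lin_map M m n) f g"
  shows "finite_support_function (Rn m) g"
proof -
  obtain R where R: "0 \<le> R" "K \<inter> space (Rn n) \<subseteq> cube n R"
    using compact_subset_cube[OF K(1)] .
  then show ?thesis
    using K(2) lin_map_cube[OF _ R(1)] emeasure_cube_finite
    by (intro finite_support_function_pushforward[OF f push,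
        where S = "cube m ((\<Sum>j<m. \<Sum>l<n. \<bar>M j l\<bar>) * R)"]) auto
qed

lemma ratio_le_BL:
  assumes g: "\<And>i. i < k \<Longrightarrow> integrable (Rn (dd i)) (g i)"
      "\<And>i y. i < k \<Longrightarrow> y \<in> space (Rn (dd i)) \<Longrightarrow> 0 \<le> g i y"
    and P: "0 < (\<Prod>i<k. (\<integral>y. g i y \<partial>Rn (dd i)) powr c i)"
  shows "(\<integral>\<^sup>+x. ennreal (\<Prod>i<k. g i (B i x) powr c i) \<partial>Rn d)
           / ennreal (\<Prod>i<k. (\<integral>y. g i y \<partial>Rn (dd i)) powr c i) \<le> BL d k dd B c"
  unfolding BL_def
proof (rule Inf_greatest, safe)
  fix C :: ennreal
  assume "\<forall>g. (\<forall>i<k. integrable (Rn (dd i)) (g i) \<and> (\<forall>y\<in>space (Rn (dd i)). 0 \<le> g i y)) \<longrightarrow>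
      (\<integral>\<^sup>+x. ennreal (\<Prod>i<k. g i (B i x) powr c i) \<partial>Rn d)
        \<le> C * ennreal (\<Prod>i<k. (\<integral>y. g i y \<partial>Rn (dd i)) powr c i)"
  then have "(\<integral>\<^sup>+x. ennreal (\<Prod>i<k. g i (B i x) powr c i) \<partial>Rn d)
      \<le> ennreal (\<Prod>i<k. (\<integral>y. g i y \<partial>Rn (dd i)) powr c i) * C"
    using g by (simp add: mult.commute)
  then show "(\<integral>\<^sup>+x. ennreal (\<Prod>i<k. g i (B i x) powr c i) \<partial>Rn d)
      / ennreal (\<Prod>i<k. (\<integral>y. g i y \<partial>Rn (dd i)) powr c i) \<le> C"
    using P by (intro divide_le_posI_ennreal) auto
qed

lemma BL_pos: "0 < BL d k dd (\<lambda>i. lin_map (Bm i) (dd i) d) c"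
proof -
  define N where "N i = (\<Sum>j<dd i. \<Sum>l<d. \<bar>Bm i j l\<bar>)" for i
  define g :: "nat \<Rightarrow> (nat \<Rightarrow> real) \<Rightarrow> real" where "g i = indicator (cube (dd i) (N i + 1))" for i
  define P where "P = (\<Prod>i<k. (\<integral>y. g i y \<partial>Rn (dd i)) powr c i)"
  have N: "0 \<le> N i" for i
    unfolding N_def by (simp add: sum_nonneg)
  have "0 < (\<integral>y. g i y \<partial>Rn (dd i))" for i
    using N[of i] sets.sets_into_space[OF sets_cube] by (simp add: g_def Int_absorb2 measure_cube)
  then have P: "0 < P"
    unfolding P_def using order_less_imp_not_eq2 by (intro prod_pos) auto
  have "lin_map (Bm i) (dd i) d x \<in> cube (dd i) (N i + 1)" if "x \<in> cube d 1" for i x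
    using lin_map_cube[OF that, of "Bm i" "dd i"] cube_mono[of "N i" "N i + 1"] by (auto simp: N_def)
  then have "indicator (cube d 1) x \<le> ennreal (\<Prod>i<k. g i (lin_map (Bm i) (dd i) d x) powr c i)" for x
    by (cases "x \<in> cube d 1") (simp_all add: g_def)
  then have "(\<integral>\<^sup>+x. indicator (cube d 1) x \<partial>Rn d)
      \<le> (\<integral>\<^sup>+x. ennreal (\<Prod>i<k. g i (lin_map (Bm i) (dd i) d x) powr c i) \<partial>Rn d)"
    by (intro nn_integral_mono)
  moreover have "(\<integral>\<^sup>+x. indicator (cube d 1) x \<partial>Rn d) = ennreal (2 ^ d)"
    by (simp add: emeasure_cube flip: ennreal_power)
  ultimately have "ennreal (2 ^ d)
      \<le> (\<integral>\<^sup>+x. ennreal (\<Prod>i<k. g i (lin_map (Bm i) (dd i) d x) powr c i) \<partial>Rn d)"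
    by simp
  then have "0 < (\<integral>\<^sup>+x. ennreal (\<Prod>i<k. g i (lin_map (Bm i) (dd i) d x) powr c i) \<partial>Rn d)"
    by (rule order.strict_trans2[rotated]) simp
  then have "0 < (\<integral>\<^sup>+x. ennreal (\<Prod>i<k. g i (lin_map (Bm i) (dd i) d x) powr c i) \<partial>Rn d) / ennreal P"
    by (simp add: ennreal_zero_less_divide)
  also have "\<dots> \<le> BL d k dd (\<lambda>i. lin_map (Bm i) (dd i) d) c"
    unfolding P_def using P by (intro ratio_le_BL) (auto simp: g_def P_def integrable_indicator_cube)
  finally show ?thesis .
qed

lemma ln_divide_powr_prod:
  fixes X b :: real and Y t :: "'i \<Rightarrow> real"
  assumes "0 < X" "0 < b" "finite I" "\<And>i. i \<in> I \<Longrightarrow> 0 < Y i"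
  shows "ln (X / (b powr e * (\<Prod>i\<in>I. Y i powr t i))) = ln X - e * ln b - (\<Sum>i\<in>I. t i * ln (Y i))"
proof -
  define P where "P = (\<Prod>i\<in>I. Y i powr t i)"
  have Y: "Y i \<noteq> 0" if "i \<in> I" for i
    using assms(4)[OF that] by simp
  have "ln P = (\<Sum>i\<in>I. ln (Y i powr t i))"
    unfolding P_def using assms(3) Y by (intro ln_prod) auto
  also have "\<dots> = (\<Sum>i\<in>I. t i * ln (Y i))"
    using Y by (intro sum.cong) (auto simp: ln_powr)
  finally have "ln P = (\<Sum>i\<in>I. t i * ln (Y i))" .
  moreover have "0 < P"
    unfolding P_def using Y by (intro prod_pos) simp
  ultimately show ?thesis
    unfolding P_def[symmetric] using assms by (simp add: ln_div ln_mult ln_powr)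
qed

lemma has_real_derivative_ln_quotient:
  fixes N :: "real \<Rightarrow> real" and Y :: "'i \<Rightarrow> real \<Rightarrow> real"
  assumes I: "finite I" and b: "0 < b" and p: "0 < p" "p < 1"
    and N_pos: "\<And>q. 0 < q \<Longrightarrow> q < 1 \<Longrightarrow> 0 < N q"
    and Y_pos: "\<And>i q. i \<in> I \<Longrightarrow> 0 < q \<Longrightarrow> q < 1 \<Longrightarrow> 0 < Y i q"
    and dN: "((\<lambda>q. ln (N q)) has_real_derivative DN) (at p)"
    and dY: "\<And>i. i \<in> I \<Longrightarrow> ((\<lambda>q. t i * ln (Y i q)) has_real_derivative DY i) (at p)"
  shows "((\<lambda>q. ln (N q / (b powr (1 / q - 1) * (\<Prod>i\<in>I. Y i q powr t i)))) has_real_derivative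
           DN + ln b / p\<^sup>2 - (\<Sum>i\<in>I. DY i)) (at p)"
proof -
  have "((\<lambda>q. ln (N q) - (1 / q - 1) * ln b - (\<Sum>i\<in>I. t i * ln (Y i q))) has_real_derivative
      DN - - ln b / p\<^sup>2 - (\<Sum>i\<in>I. DY i)) (at p)"
    using p dY by (intro DERIV_diff DERIV_sum dN) (auto intro!: derivative_eq_intros simp: power2_eq_square)
  then have "((\<lambda>q. ln (N q / (b powr (1 / q - 1) * (\<Prod>i\<in>I. Y i q powr t i)))) has_real_derivative
      DN - - ln b / p\<^sup>2 - (\<Sum>i\<in>I. DY i)) (at p)"
    by (rule has_field_derivative_transform_within_open[where S = "{0<..<1}"])
      (use p in \<open>auto simp: ln_divide_powr_prod I b N_pos Y_pos\<close>)
  then show ?thesis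
    by simp
qed

theorem proposition5p2:
  fixes d k :: nat and dd :: "nat \<Rightarrow> nat"
    and Bm :: "nat \<Rightarrow> nat \<Rightarrow> nat \<Rightarrow> real"
    and c \<theta> :: "nat \<Rightarrow> real"
    and f :: "(nat \<Rightarrow> real) \<Rightarrow> real"
    and fi :: "nat \<Rightarrow> (nat \<Rightarrow> real) \<Rightarrow> real"
    and pi :: "real \<Rightarrow> nat \<Rightarrow> real"
    and \<Lambda> :: "real \<Rightarrow> real"
    and p :: real
  defines "B \<equiv> (\<lambda>i. lin_map (Bm i) (dd i) d)"
  assumes surj: "\<And>i. i < k \<Longrightarrow> B i ` space (Rn d) = space (Rn (dd i))"
    and c_pos: "\<And>i. i < k \<Longrightarrow> 0 < c i"
    and \<theta>_pos: "\<And>i. i < k \<Longrightarrow> 0 < \<theta> i"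
    and \<theta>_sum: "(\<Sum>i<k. \<theta> i) = 1"
    and BL_fin: "BL d k dd B c < \<infinity>"
    and f_meas: "f \<in> borel_measurable (Rn d)"
    and f_nonneg: "\<And>x. x \<in> space (Rn d) \<Longrightarrow> 0 \<le> f x"
    and f_bdd: "\<exists>M. \<forall>x\<in>space (Rn d). f x \<le> M"
    and f_supp: "\<exists>K. compact K \<and> (\<forall>x\<in>space (Rn d). f x \<noteq> 0 \<longrightarrow> x \<in> K)"
    and f_nonzero: "\<not> (AE x in Rn d. f x = 0)"
    and fi_push: "\<And>i. i < k \<Longrightarrow> is_pushforward (Rn d) (Rn (dd i)) (B i) f (fi i)"
    and pi_def: "\<And>q i. pi q i = 1 / (1 - (c i / \<theta> i) * (1 - 1 / q))"
    and \<Lambda>_def: "\<And>q. \<Lambda> q = Lp_norm (Rn d) q f /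
         (enn2real (BL d k dd B c) powr (1 / q - 1) *
          (\<Prod>i<k. Lp_norm (Rn (dd i)) (pi q i) (fi i) powr \<theta> i))"
    and p: "0 < p" "p < 1"
  shows "((\<lambda>q. ln (\<Lambda> q)) has_real_derivative
           (ln (enn2real (BL d k dd B c))
            - cont_entropy (Rn d) (\<lambda>x. f x powr p / Lp_norm (Rn d) p f powr p)
            + (\<Sum>i<k. c i * cont_entropy (Rn (dd i))
                 (\<lambda>y. fi i y powr pi p i / Lp_norm (Rn (dd i)) (pi p i) (fi i) powr pi p i)))
           / p\<^sup>2) (at p)"
proof -
  define BLr where "BLr = enn2real (BL d k dd B c)"
  define Hf where "Hf = cont_entropy (Rn d) (\<lambda>x. f x powr p / Lp_norm (Rn d) p f powr p)"
  define Hi where "Hi i = cont_entropy (Rn (dd i))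
    (\<lambda>y. fi i y powr pi p i / Lp_norm (Rn (dd i)) (pi p i) (fi i) powr pi p i)" for i
  have BLr: "0 < BLr"
    using BL_pos[of d k dd Bm c] BL_fin unfolding B_def BLr_def by (simp add: enn2real_positive_iff)
  obtain C K where C: "\<forall>x\<in>space (Rn d). f x \<le> C"
    and K: "compact K" "\<forall>x\<in>space (Rn d). f x \<noteq> 0 \<longrightarrow> x \<in> K"
    using f_bdd f_supp by blast
  interpret f: finite_support_function "Rn d" f
    by (rule finite_support_function_compact_support[OF f_meas f_nonneg C K f_nonzero])
  have fi: "finite_support_function (Rn (dd i)) (fi i)" if i: "i < k" for i
    using fi_push[OF i] unfolding B_def
    by (rule finite_support_function_pushforward_lin_map[OF f.finite_support_function_axioms K])
  have pi_bounds: "0 < pi q i" "pi q i \<le> 1" if "i < k" "0 < q" "q < 1" for i q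
    unfolding pi_def using exponent_map_bounds[of "c i / \<theta> i" q] c_pos \<theta>_pos that by auto
  have d_fi: "((\<lambda>q. \<theta> i * ln (Lp_norm (Rn (dd i)) (pi q i) (fi i))) has_real_derivative
      - (c i * Hi i) / p\<^sup>2) (at p)" if i: "i < k" for i
  proof -
    have "0 < c i / \<theta> i"
      using c_pos[OF i] \<theta>_pos[OF i] by simp
    from DERIV_cmult[OF finite_support_function.has_real_derivative_ln_Lp_norm_exponent_map
        [OF fi[OF i] this p], of "\<theta> i"]
    show ?thesis
      using \<theta>_pos[OF i] unfolding pi_def Hi_def by simp
  qed
  have "((\<lambda>q. ln (\<Lambda> q)) has_real_derivative
      - Hf / p\<^sup>2 + ln BLr / p\<^sup>2 - (\<Sum>i<k. - (c i * Hi i) / p\<^sup>2)) (at p)"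
    unfolding \<Lambda>_def BLr_def[symmetric] Hf_def
    using BLr p f.Lp_norm_pos finite_support_function.Lp_norm_pos[OF fi] pi_bounds d_fi
    by (intro has_real_derivative_ln_quotient f.has_real_derivative_ln_Lp_norm) auto
  then show ?thesis
    unfolding Hf_def[symmetric] Hi_def[symmetric] BLr_def[symmetric]
    by (simp add: sum_negf sum_divide_distrib diff_divide_distrib add_divide_distrib)
qed

end
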